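(* For $n\ge1$ let $T_n$ be the program defined below. The class $\{T_n: n\ge 1\}$ is isomorphically complete with respect to the cascade program product: for every program $P$ there exists a cascade program product $\mathbf P$ all of whose factors are programs from $\{T_n:n\ge1\}$ such that $\Psi_P\in\mathbf I\mathbf S(\{\Psi_{\mathbf P}\})$, i.e. the characteristic automaton of $P$ is isomorphic to a subautomaton of the characteristic automaton of $\mathbf P$.
   Context: Notation: $[n]=\{1,\dots,n\}$. Programs: a (normal logic) program $P$ over a finite nonempty set of atoms $\Gamma_P$ is a finite nonempty set of rules $a\leftarrow b_1,\dots,b_k,\mathrm{not}\,b_{k+1},\dots,\mathrm{not}\,b_m$ ($m\ge k\ge 0$, atoms in $\Gamma_P$); for such a rule $r$, $H(r)=a$, $B^+(r)=\{b_1,\dots,b_k\}$, $B^-(r)=\{b_{k+1},\dots,b_m\}$. $\mathcal I_P$ is the power set of $\Gamma_P$. $\Psi_P:\mathcal I_P\times\mathcal I_P\to\mathcal I_P$ is $\Psi_P(I,J)=\{H(r): r\in P,\ B^+(r)\subseteq I,\ B^-(r)\cap J=\emptyset\}$. The characteristic automaton of $P$ is $\langle \mathcal I_P,\mathcal I_P,\Psi_P\rangle$, also denoted $\Psi_P$. The programs $T_n$: for $n\ge1$ let $\sigma_1,\dots,\sigma_{n^n}$ enumerate all mappings $[n]\to[n]$. $T_n$ is the program over $[n^n]$ consisting of the rules $\sigma_k(j)\leftarrow j,\ \mathrm{not}\,k$ for all $j\in[n]$ and $k\in[n^n]$. Automata: an automaton $\langle Q,\Sigma,\delta\rangle$ has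 finite state set $Q$, finite nonempty input alphabet $\Sigma$, and $\delta:Q\times\Sigma\to Q$. $\langle Q',\Sigma',\delta'\rangle$ is a subautomaton of $\langle Q,\Sigma,\delta\rangle$ if $Q'\subseteq Q$, $\Sigma'\subseteq\Sigma$, $\delta(Q'\times\Sigma')\subseteq Q'$ and $\delta'=\delta|_{Q'\times\Sigma'}$. An isomorphism onto $\langle Q',\Sigma',\delta'\rangle$ is a pair of bijections $h_1:Q\to Q'$, $h_2:\Sigma\to\Sigma'$ with $h_1(\delta(q,x))=\delta'(h_1(q),h_2(x))$ for all $q,x$. $\mathbf S(\mathcal A)$, $\mathbf I(\mathcal A)$ denote the classes of subautomata and isomorphic images of automata in $\mathcal A$. Cascade program product: let $P_1,\dots,P_k$ ($k\ge1$) be programs and $\mathcal I_{\mathbf P}$ a finite nonempty set. A feedforward function is $\psi_{\mathbf P}=(\psi_{\mathbf P,1},\dots,\psi_{\mathbf P,k})$ with $\psi_{\mathbf P,i}:(\mathcal I_{P_1}\times\dots\times\mathcal I_{P_k})\times\mathcal I_{\mathbf P}\to\mathcal I_{P_i}$ not depending on its $j$-th component for any $j\ge i$. The product $\mathbf P=P_1\ltimes\dots\ltimes P_k[\mathcal I_{\mathbf P},\psi_{\mathbf P}]$ has characteristic automaton $\Psi_{\mathbf P}=\langle \mathcal I_{P_1}\times\dots\times\mathcal I_{P_k},\ \mathcal I_{\mathbf P},\ \Psi_{\mathbf P}\rangle$ with $\Psi_{\mathbf P}((I_1,\dots,I_k),\mathbf J)=\big(\Psi_{P_1}(I_1,\psi_{\mathbf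 P,1}(\mathbf J)),\dots,\Psi_{P_k}(I_k,\psi_{\mathbf P,k}((I_1,\dots,I_{k-1}),\mathbf J))\big)$. The product isomorphically represents $P$ if $\Psi_P\in\mathbf I\mathbf S(\{\Psi_{\mathbf P}\})$. *)

theory Defs
  imports "HOL-Library.FuncSet"
begin

text \<open>A rule  a <- b1,...,bk, not b(k+1),...,not bm  is represented as the triple
  (H(r), B+(r), B-(r)).\<close>
type_synonym 'a rule = "'a \<times> 'a set \<times> 'a set"

definition is_program :: "'a set \<Rightarrow> 'a rule set \<Rightarrow> bool" where
  "is_program Gam R \<longleftrightarrow> finite Gam \<and> Gam \<noteq> {} \<and> finite R \<and> R \<noteq> {} \<and>
     (\<forall>(h, bp, bn) \<in> R. h \<in> Gam \<and> bp \<subseteq> Gam \<and> bn \<subseteq> Gam)"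

definition Psi :: "'a rule set \<Rightarrow> 'a set \<Rightarrow> 'a set \<Rightarrow> 'a set" where
  "Psi R I J = {h. \<exists>bp bn. (h, bp, bn) \<in> R \<and> bp \<subseteq> I \<and> bn \<inter> J = {}}"

type_synonym ('q, 's) automaton = "'q set \<times> 's set \<times> ('q \<Rightarrow> 's \<Rightarrow> 'q)"

definition is_automaton :: "('q, 's) automaton \<Rightarrow> bool" where
  "is_automaton A \<longleftrightarrow> (case A of (Q, S, d) \<Rightarrow>
     finite Q \<and> finite S \<and> S \<noteq> {} \<and> (\<forall>q\<in>Q. \<forall>x\<in>S. d q x \<in> Q))"

definition subautomaton :: "('q, 's) automaton \<Rightarrow> ('q, 's) automaton \<Rightarrow> bool" where
  "subautomaton A' A \<longleftrightarrow> (case A' of (Q', S', d') \<Rightarrow> case A of (Q, S, d) \<Rightarrow>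
     is_automaton A' \<and> Q' \<subseteq> Q \<and> S' \<subseteq> S \<and> (\<forall>q\<in>Q'. \<forall>x\<in>S'. d q x \<in> Q') \<and>
     (\<forall>q\<in>Q'. \<forall>x\<in>S'. d' q x = d q x))"

definition aut_iso :: "('q \<Rightarrow> 'q2) \<Rightarrow> ('s \<Rightarrow> 's2) \<Rightarrow> ('q, 's) automaton \<Rightarrow> ('q2, 's2) automaton \<Rightarrow> bool" where
  "aut_iso h1 h2 A B \<longleftrightarrow> (case A of (Q, S, d) \<Rightarrow> case B of (Q', S', d') \<Rightarrow>
     bij_betw h1 Q Q' \<and> bij_betw h2 S S' \<and>
     (\<forall>q\<in>Q. \<forall>x\<in>S. h1 (d q x) = d' (h1 q) (h2 x)))"

definition in_IS :: "('q, 's) automaton \<Rightarrow> ('q2, 's2) automaton \<Rightarrow> bool" where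
  "in_IS A B \<longleftrightarrow> (\<exists>A' h1 h2. subautomaton A' B \<and> aut_iso h1 h2 A A')"

definition char_aut :: "'a set \<Rightarrow> 'a rule set \<Rightarrow> ('a set, 'a set) automaton" where
  "char_aut Gam R = (Pow Gam, Pow Gam, Psi R)"

text \<open>Cascade product of the programs Ps = [P_1,...,P_k] (0-indexed) with input set IP
  and feedforward function psi; psi i receives the first i components (I_1,...,I_i-1)
  of the state, so it does not depend on components j >= i.\<close>
definition casc_states :: "('b set \<times> 'b rule set) list \<Rightarrow> 'b set list set" where
  "casc_states Ps = {xs. length xs = length Ps \<and> (\<forall>i<length Ps. xs ! i \<subseteq> fst (Ps ! i))}"

definition casc_trans :: "('b set \<times> 'b rule set) list \<Rightarrow> (nat \<Rightarrow> 'b set list \<Rightarrow> 'c \<Rightarrow> 'b set)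
     \<Rightarrow> 'b set list \<Rightarrow> 'c \<Rightarrow> 'b set list" where
  "casc_trans Ps psi xs J =
     map (\<lambda>i. Psi (snd (Ps ! i)) (xs ! i) (psi i (take i xs) J)) [0..<length Ps]"

definition is_cascade :: "('b set \<times> 'b rule set) list \<Rightarrow> 'c set \<Rightarrow> (nat \<Rightarrow> 'b set list \<Rightarrow> 'c \<Rightarrow> 'b set) \<Rightarrow> bool" where
  "is_cascade Ps IP psi \<longleftrightarrow> Ps \<noteq> [] \<and> (\<forall>(G, R) \<in> set Ps. is_program G R) \<and>
     finite IP \<and> IP \<noteq> {} \<and>
     (\<forall>xs\<in>casc_states Ps. \<forall>J\<in>IP. \<forall>i<length Ps. psi i (take i xs) J \<subseteq> fst (Ps ! i))"

definition casc_aut :: "('b set \<times> 'b rule set) list \<Rightarrow> 'c set \<Rightarrow> (nat \<Rightarrow> 'b set list \<Rightarrow> 'c \<Rightarrow> 'b set)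
     \<Rightarrow> ('b set list, 'c) automaton" where
  "casc_aut Ps IP psi = (casc_states Ps, IP, casc_trans Ps psi)"

text \<open>The program T_n, given an enumeration sig n : [n^n] -> ([n] -> [n]).\<close>
definition T_atoms :: "nat \<Rightarrow> nat set" where
  "T_atoms n = {1..n ^ n}"

definition T_rules :: "(nat \<Rightarrow> nat \<Rightarrow> nat \<Rightarrow> nat) \<Rightarrow> nat \<Rightarrow> nat rule set" where
  "T_rules sig n = {(sig n k j, {j}, {k}) | j k. j \<in> {1..n} \<and> k \<in> {1..n ^ n}}"

definition T_prog :: "(nat \<Rightarrow> nat \<Rightarrow> nat \<Rightarrow> nat) \<Rightarrow> nat \<Rightarrow> nat set \<times> nat rule set" where
  "T_prog sig n = (T_atoms n, T_rules sig n)"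

end

theory Submission
  imports Defs
begin

text \<open>
  The program T_n acts on singleton interpretations as the full transformation
  monoid of [n]: from the state {j}, the input [n^n] - {k} switches off exactly the rules
  with negative body k, so the successor state is {sigma_k(j)}.  Hence a single copy of T_n
  already simulates every automaton with at most n states: encode the states injectively
  as numbers in [n], and feed, for every input letter x, the index k of the transformation
  of [n] that x induces.  The characteristic automaton of P has card (Pow Gam) states, so
  the one-factor cascade consisting of T_N with N = card (Pow Gam) isomorphically
  represents P.
\<close>

lemma in_IS_by_state_embedding:
  assumes autA: "is_automaton (Q, S, d)"
    and inj: "inj_on h Q"
    and states: "h ` Q \<subseteq> Q'"
    and inputs: "S \<subseteq> S'"
    and commutes: "\<And>q x. q \<in> Q \<Longrightarrow> x \<in> S \<Longrightarrow> h (d q x) = d' (h q) x"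
  shows "in_IS (Q, S, d) (Q', S', d')"
proof -
  have closed: "\<forall>q\<in>h ` Q. \<forall>x\<in>S. d' q x \<in> h ` Q"
    using autA commutes unfolding is_automaton_def by (auto simp flip: commutes)
  have "is_automaton (h ` Q, S, d')"
    using autA closed unfolding is_automaton_def by auto
  then have sub: "subautomaton (h ` Q, S, d') (Q', S', d')"
    unfolding subautomaton_def using states inputs closed by auto
  have "aut_iso h id (Q, S, d) (h ` Q, S, d')"
    unfolding aut_iso_def using inj commutes by (simp add: bij_betw_def)
  with sub show ?thesis
    unfolding in_IS_def by blast
qed

lemma Psi_subset_atoms: "is_program Gam R \<Longrightarrow> Psi R I J \<subseteq> Gam"
  unfolding is_program_def Psi_def by fastforce

lemma T_prog_is_program:
  assumes sig: "bij_betw (sig n) {1..n ^ n} ({1..n} \<rightarrow>\<^sub>E {1..n})" and n: "n \<ge> 1"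
  shows "is_program (T_atoms n) (T_rules sig n)"
proof -
  have n_le: "n \<le> n ^ n"
    using n by (metis power_increasing power_one_right)
  have rules: "T_rules sig n = (\<lambda>(j, k). (sig n k j, {j}, {k})) ` ({1..n} \<times> {1..n ^ n})"
    unfolding T_rules_def by auto
  have "sig n k j \<in> T_atoms n" if "j \<in> {1..n}" "k \<in> {1..n ^ n}" for j k
  proof -
    have "sig n k \<in> {1..n} \<rightarrow>\<^sub>E {1..n}"
      using sig that(2) unfolding bij_betw_def by blast
    then have "sig n k j \<in> {1..n}"
      using that(1) by blast
    then show ?thesis
      using n_le unfolding T_atoms_def by auto
  qed
  then show ?thesis
    unfolding is_program_def T_atoms_def rules using n n_le by auto
qed

lemma Psi_T_singleton:
  assumes "j \<in> {1..n}" and "k \<in> {1..n ^ n}"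
  shows "Psi (T_rules sig n) {j} ({1..n ^ n} - {k}) = {sig n k j}"
  using assms unfolding Psi_def T_rules_def by blast

lemma T_prog_simulates_automaton:
  fixes d :: "'q \<Rightarrow> 's \<Rightarrow> 'q"
  assumes sig: "bij_betw (sig n) {1..n ^ n} ({1..n} \<rightarrow>\<^sub>E {1..n})" and n: "n \<ge> 1"
    and autA: "is_automaton (Q, S, d)" and small: "card Q \<le> n"
  shows "\<exists>psi. is_cascade [T_prog sig n] S psi \<and>
           in_IS (Q, S, d) (casc_aut [T_prog sig n] S psi)"
proof -
  have finQ: "finite Q" and finS: "finite S" and "S \<noteq> {}"
    and d_in: "\<And>q x. q \<in> Q \<Longrightarrow> x \<in> S \<Longrightarrow> d q x \<in> Q"
    using autA unfolding is_automaton_def by auto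
  obtain e where e_inj: "inj_on e Q" and e_in: "e ` Q \<subseteq> {1..n}"
    using small finQ by (metis card_atLeastAtMost card_le_inj diff_Suc_1 finite_atLeastAtMost)
  have n_le: "n \<le> n ^ n"
    using n by (metis power_increasing power_one_right)
  define trans_of where
    "trans_of x = (\<lambda>j\<in>{1..n}. if j \<in> e ` Q then e (d (inv_into Q e j) x) else j)" for x
  define index_of where "index_of x = inv_into {1..n ^ n} (sig n) (trans_of x)" for x
  have "trans_of x \<in> {1..n} \<rightarrow>\<^sub>E {1..n}" if "x \<in> S" for x
  proof -
    have "e (d (inv_into Q e j) x) \<in> {1..n}" if "j \<in> e ` Q" for j
      using e_in d_in[OF inv_into_into[OF that] \<open>x \<in> S\<close>] by blast
    then show ?thesis
      unfolding trans_of_def by auto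
  qed
  then have index_in: "index_of x \<in> {1..n ^ n}" and sig_index: "sig n (index_of x) = trans_of x"
    if "x \<in> S" for x
    using sig that unfolding index_of_def bij_betw_def
    by (metis inv_into_into, metis f_inv_into_f)
  define psi :: "nat \<Rightarrow> nat set list \<Rightarrow> 's \<Rightarrow> nat set"
    where "psi i xs x = {1..n ^ n} - {index_of x}" for i xs x
  have cascade: "is_cascade [T_prog sig n] S psi"
    using T_prog_is_program[of sig n, OF sig n] finS \<open>S \<noteq> {}\<close>
    unfolding is_cascade_def psi_def by (auto simp: T_prog_def T_atoms_def)
  have commutes: "[{e (d q x)}] = casc_trans [T_prog sig n] psi [{e q}] x"
    if q: "q \<in> Q" and x: "x \<in> S" for q x
  proof -
    have "casc_trans [T_prog sig n] psi [{e q}] x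
        = [Psi (T_rules sig n) {e q} ({1..n ^ n} - {index_of x})]"
      unfolding casc_trans_def psi_def T_prog_def by simp
    also have "\<dots> = [{trans_of x (e q)}]"
      using Psi_T_singleton[of "e q" n "index_of x" sig] e_in q index_in[OF x] sig_index[OF x]
      by auto
    also have "\<dots> = [{e (d q x)}]"
      using e_in e_inj q unfolding trans_of_def by auto
    finally show ?thesis by simp
  qed
  have "(\<lambda>q. [{e q}]) ` Q \<subseteq> casc_states [T_prog sig n]"
    using e_in n_le unfolding casc_states_def by (auto simp: T_prog_def T_atoms_def)
  then have "in_IS (Q, S, d) (casc_aut [T_prog sig n] S psi)"
    unfolding casc_aut_def
    using in_IS_by_state_embedding[OF autA, of "\<lambda>q. [{e q}]"] e_inj commutes
    by (simp add: inj_on_def)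
  with cascade show ?thesis by blast
qed

lemma char_aut_is_automaton: "is_program Gam R \<Longrightarrow> is_automaton (char_aut Gam R)"
  using Psi_subset_atoms[of Gam R] unfolding is_automaton_def char_aut_def is_program_def
  by auto

theorem theorem5p1:
  fixes sig :: "nat \<Rightarrow> nat \<Rightarrow> nat \<Rightarrow> nat"
    and Gam :: "'a set" and R :: "'a rule set"
  assumes enum: "\<forall>n\<ge>1. bij_betw (sig n) {1..n ^ n} ({1..n} \<rightarrow>\<^sub>E {1..n})"
    and prog: "is_program Gam R"
  shows "\<exists>Ps (IP :: 'a set set) psi.
           (\<forall>p\<in>set Ps. \<exists>n\<ge>1. p = T_prog sig n) \<and>
           is_cascade Ps IP psi \<and>
           in_IS (char_aut Gam R) (casc_aut Ps IP psi)"
proof -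
  define N where "N = card (Pow Gam)"
  have "N \<ge> 1"
    using prog unfolding N_def is_program_def
    by (metis Pow_bottom card_0_eq empty_iff finite_Pow_iff less_one not_le)
  then obtain psi where "is_cascade [T_prog sig N] (Pow Gam) psi"
      and "in_IS (Pow Gam, Pow Gam, Psi R) (casc_aut [T_prog sig N] (Pow Gam) psi)"
    using T_prog_simulates_automaton[of sig N "Pow Gam" "Pow Gam" "Psi R"] enum
      char_aut_is_automaton[OF prog]
    unfolding char_aut_def N_def by auto
  with \<open>N \<ge> 1\<close> show ?thesis
    unfolding char_aut_def by (metis empty_iff set_ConsD set_empty)
qed

end
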